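(* For each $n$ let $\mathbf d=(d(1),\dots,d(n))$ be a sequence of non-negative integers with even sum, $M=\sum_i d(i)$, $\Delta=\max_i d(i)$, and suppose there exist sets $S\subseteq[n]$ and a function $\delta=\delta(n)\to0$ such that, with $\gamma=d(S)/M$, $\Delta^2(\gamma^{-1}\log M)^{12}\le\delta\, d(S)$. Then for all sufficiently large $n$, $\mathbf d$ is graphical, i.e. there exists a simple graph on vertex set $[n]$ in which vertex $i$ has degree $d(i)$ for all $i$.
   Context: $d(S)=\sum_{i\in S}d(i)$; $n\to\infty$ (with $M\to\infty$). *)

theory Defs
  imports Complex_Main
begin

definition graphical :: "nat \<Rightarrow> (nat \<Rightarrow> nat) \<Rightarrow> bool" where
  "graphical n d \<longleftrightarrow> (\<exists>E :: nat set set.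
      (\<forall>e\<in>E. e \<subseteq> {1..n} \<and> card e = 2) \<and>
      (\<forall>i\<in>{1..n}. card {e\<in>E. i \<in> e} = d i))"

end

theory Submission
  imports Defs
begin

text \<open>Since \<open>\<gamma> \<le> 1\<close> and \<open>ln M \<ge> 1\<close>, the hypothesis gives \<open>\<Delta>\<^sup>2 \<le> \<delta> d(S) \<le> \<delta> M\<close>,
  so \<open>5 \<Delta>\<^sup>2 < M\<close> once \<open>\<delta> < 1/5\<close>; and every sequence with even sum \<open>M\<close> and maximum
  \<open>\<Delta>\<close> with \<open>5 \<Delta>\<^sup>2 < M\<close> is graphical. For the latter, grow a subgraph \<open>H\<close> with
  \<open>deg\<^sub>H \<le> d\<close> one edge at a time. If two unsaturated vertices are non-adjacent, join
  them. Otherwise the unsaturated vertices form a clique, so there are at most \<open>\<Delta>\<close> of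
  them and the deficit \<open>M - 2|E(H)|\<close> is at most \<open>\<Delta>\<^sup>2\<close>; being even and positive, it
  yields unsaturated \<open>i, j\<close> (with \<open>i = j\<close> only if \<open>i\<close> lacks two edges). Their closed
  neighbourhoods meet at most \<open>2\<Delta>\<^sup>2 < |E(H)|\<close> edges, so some edge \<open>uv\<close> avoids them,
  and replacing \<open>uv\<close> by \<open>iu\<close> and \<open>jv\<close> adds one edge.\<close>

definition degree :: "nat set set \<Rightarrow> nat \<Rightarrow> nat" where
  "degree E v = card {e\<in>E. v \<in> e}"

definition simple_graph_on :: "nat \<Rightarrow> nat set set \<Rightarrow> bool" where
  "simple_graph_on n E \<longleftrightarrow> (\<forall>e\<in>E. e \<subseteq> {1..n} \<and> card e = 2)"

definition neighbours :: "nat set set \<Rightarrow> nat \<Rightarrow> nat set" where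
  "neighbours E v = {w. {v, w} \<in> E}"

definition partial_realization :: "nat \<Rightarrow> (nat \<Rightarrow> nat) \<Rightarrow> nat set set \<Rightarrow> bool" where
  "partial_realization n d E \<longleftrightarrow> simple_graph_on n E \<and> (\<forall>v\<in>{1..n}. degree E v \<le> d v)"

lemma graphical_iff_degree:
  "graphical n d \<longleftrightarrow> (\<exists>E. simple_graph_on n E \<and> (\<forall>v\<in>{1..n}. degree E v = d v))"
  by (simp add: graphical_def simple_graph_on_def degree_def)

lemma simple_graph_on_finite: "simple_graph_on n E \<Longrightarrow> finite E"
  unfolding simple_graph_on_def by (rule finite_subset[of _ "Pow {1..n}"]) auto

lemma degree_insert:
  "finite E \<Longrightarrow> e \<notin> E \<Longrightarrow> degree (insert e E) v = degree E v + (if v \<in> e then 1 else 0)"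
proof -
  assume "finite E" "e \<notin> E"
  moreover have "{e'\<in>insert e E. v \<in> e'} = (if v \<in> e then insert e {e'\<in>E. v \<in> e'} else {e'\<in>E. v \<in> e'})"
    by auto
  ultimately show ?thesis by (simp add: degree_def)
qed

lemma degree_Diff_singleton:
  "finite E \<Longrightarrow> e \<in> E \<Longrightarrow> degree (E - {e}) v = degree E v - (if v \<in> e then 1 else 0)"
proof -
  assume "finite E" "e \<in> E"
  moreover have "{e'\<in>E - {e}. v \<in> e'} = {e'\<in>E. v \<in> e'} - {e}" by auto
  ultimately show ?thesis by (simp add: degree_def card_Diff_singleton_if)
qed

lemma sum_degree_eq_twice_card:
  assumes "simple_graph_on n E"
  shows "(\<Sum>v\<in>{1..n}. degree E v) = 2 * card E"
proof -
  have "finite E" using assms by (rule simple_graph_on_finite)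
  then have "(\<Sum>v\<in>{1..n}. degree E v) = (\<Sum>v\<in>{1..n}. \<Sum>e\<in>E. if v \<in> e then 1 else 0)"
    by (simp add: degree_def sum.inter_filter[symmetric])
  also have "\<dots> = (\<Sum>e\<in>E. \<Sum>v\<in>{1..n}. if v \<in> e then 1 else 0)" by (rule sum.swap)
  also have "\<dots> = (\<Sum>e\<in>E. 2)"
  proof (rule sum.cong)
    fix e assume "e \<in> E"
    then have "e \<subseteq> {1..n}" "card e = 2" using assms by (auto simp: simple_graph_on_def)
    then have "{v\<in>{1..n}. v \<in> e} = e" "card e = 2" by auto
    then show "(\<Sum>v\<in>{1..n}. if v \<in> e then 1 else 0) = (2::nat)"
      by (simp add: sum.inter_filter[symmetric])
  qed simp
  finally show ?thesis by simp
qed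

lemma sum_deficit:
  assumes "partial_realization n d E"
  shows "(\<Sum>v\<in>{1..n}. d v - degree E v) = (\<Sum>v\<in>{1..n}. d v) - 2 * card E"
  using assms sum_subtractf_nat[of "{1..n}" "degree E" d] sum_degree_eq_twice_card
  by (simp add: partial_realization_def)

lemma finite_neighbours: "simple_graph_on n E \<Longrightarrow> finite (neighbours E v)"
  by (rule finite_subset[of _ "{1..n}"]) (auto simp: simple_graph_on_def neighbours_def)

lemma card_closed_neighbourhood_le:
  assumes "simple_graph_on n E" and "degree E v < k"
  shows "card (insert v (neighbours E v)) \<le> k"
proof -
  have "finite E" using assms(1) by (rule simple_graph_on_finite)
  have "inj_on (\<lambda>w. {v, w}) (neighbours E v)" by (auto simp: inj_on_def doubleton_eq_iff)
  moreover have "(\<lambda>w. {v, w}) ` neighbours E v \<subseteq> {e\<in>E. v \<in> e}" by (auto simp: neighbours_def)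
  ultimately have "card (neighbours E v) \<le> degree E v"
    unfolding degree_def using \<open>finite E\<close> by (intro card_inj_on_le) auto
  then show ?thesis using assms finite_neighbours by (simp add: card_insert_if)
qed

lemma sum_deficit_unsaturated:
  assumes "partial_realization n d E"
  shows "(\<Sum>v | v \<in> {1..n} \<and> degree E v < d v. d v - degree E v)
    = (\<Sum>v\<in>{1..n}. d v) - 2 * card E"
proof -
  have "(\<Sum>v | v \<in> {1..n} \<and> degree E v < d v. d v - degree E v) = (\<Sum>v\<in>{1..n}. d v - degree E v)"
    by (rule sum.mono_neutral_left) auto
  then show ?thesis using sum_deficit[OF assms] by simp
qed

lemma exists_unsaturated_pair:
  assumes "partial_realization n d E" and "2 * card E + 2 \<le> (\<Sum>v\<in>{1..n}. d v)"
  obtains i j where "i \<in> {1..n}" "j \<in> {1..n}" "degree E i < d i" "degree E j < d j"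
    "i = j \<Longrightarrow> degree E i + 2 \<le> d i"
proof -
  define P where "P = {v. v \<in> {1..n} \<and> degree E v < d v}"
  have deficit: "(\<Sum>v\<in>P. d v - degree E v) \<ge> 2"
    using sum_deficit_unsaturated[OF assms(1)] assms(2) unfolding P_def by linarith
  then have "P \<noteq> {}" by auto
  then obtain i where i: "i \<in> P" by blast
  show ?thesis
  proof (cases "degree E i + 2 \<le> d i")
    case True
    then show ?thesis using that i unfolding P_def by blast
  next
    case False
    have "P \<noteq> {i}"
    proof
      assume "P = {i}"
      then show False using deficit False by simp
    qed
    then obtain j where "j \<in> P" "j \<noteq> i" using i by blast
    then show ?thesis using that i unfolding P_def by blast
  qed
qed

lemma deficit_le_if_unsaturated_clique:
  fixes n D :: nat and d :: "nat \<Rightarrow> nat" and E :: "nat set set"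
  defines "P \<equiv> {v. v \<in> {1..n} \<and> degree E v < d v}"
  assumes pr: "partial_realization n d E" and D: "\<forall>v\<in>{1..n}. d v \<le> D"
    and clique: "\<And>i j. i \<in> P \<Longrightarrow> j \<in> P \<Longrightarrow> i \<noteq> j \<Longrightarrow> {i, j} \<in> E"
  shows "(\<Sum>v\<in>{1..n}. d v) - 2 * card E \<le> D * D"
proof -
  have G: "simple_graph_on n E" using pr by (simp add: partial_realization_def)
  have "card P \<le> D"
  proof (cases "P = {}")
    case False
    then obtain i where i: "i \<in> P" by blast
    then have "P \<subseteq> insert i (neighbours E i)" using clique by (auto simp: neighbours_def)
    moreover have "card (insert i (neighbours E i)) \<le> D"
      using i D card_closed_neighbourhood_le[OF G, of i D] unfolding P_def by fastforce
    ultimately show ?thesis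
      using card_mono[of "insert i (neighbours E i)" P] finite_neighbours[OF G] by simp
  qed simp
  have "(\<Sum>v\<in>{1..n}. d v) - 2 * card E = (\<Sum>v\<in>P. d v - degree E v)"
    using sum_deficit_unsaturated[OF pr] unfolding P_def by simp
  also have "\<dots> \<le> (\<Sum>v\<in>P. D)"
  proof (rule sum_mono)
    fix v assume "v \<in> P"
    then have "d v \<le> D" using D by (auto simp: P_def)
    then show "d v - degree E v \<le> D" by linarith
  qed
  also have "\<dots> \<le> D * D" using \<open>card P \<le> D\<close> by simp
  finally show ?thesis .
qed

lemma exists_edge_avoiding:
  assumes "simple_graph_on n E" and "finite A" and "\<forall>a\<in>A. degree E a \<le> D"
    and "card A * D < card E"
  obtains u v where "{u, v} \<in> E" "u \<noteq> v" "u \<notin> A" "v \<notin> A"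
proof -
  have "finite E" using assms(1) by (rule simple_graph_on_finite)
  have "card {e\<in>E. e \<inter> A \<noteq> {}} \<le> card (\<Union>a\<in>A. {e\<in>E. a \<in> e})"
    using \<open>finite E\<close> assms(2) by (intro card_mono) auto
  also have "\<dots> \<le> (\<Sum>a\<in>A. degree E a)" unfolding degree_def by (rule card_UN_le[OF assms(2)])
  also have "\<dots> \<le> card A * D" using sum_mono[of A "degree E" "\<lambda>_. D"] assms(3) by simp
  finally have "card {e\<in>E. e \<inter> A \<noteq> {}} < card E" using assms(4) by linarith
  then have "{e\<in>E. e \<inter> A \<noteq> {}} \<noteq> E" by (metis less_irrefl)
  then obtain e where e: "e \<in> E" "e \<inter> A = {}" by blast
  then have "card e = 2" using assms(1) by (simp add: simple_graph_on_def)
  then obtain u v where "e = {u, v}" "u \<noteq> v" by (meson card_2_iff)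
  then show ?thesis using that e by blast
qed

lemma partial_realization_insert:
  assumes "partial_realization n d E" and "{i, j} \<notin> E" "i \<noteq> j" "i \<in> {1..n}" "j \<in> {1..n}"
    and "degree E i < d i" "degree E j < d j"
  shows "partial_realization n d (insert {i, j} E)" and "card (insert {i, j} E) = Suc (card E)"
proof -
  have "finite E" using assms(1) simple_graph_on_finite by (auto simp: partial_realization_def)
  then show "card (insert {i, j} E) = Suc (card E)" using assms(2) by simp
  show "partial_realization n d (insert {i, j} E)"
    using assms degree_insert[OF \<open>finite E\<close> assms(2)]
    by (fastforce simp: partial_realization_def simple_graph_on_def)
qed

lemma partial_realization_switch:
  assumes pr: "partial_realization n d E" and uv: "{u, v} \<in> E" "u \<noteq> v"
    and ij: "i \<in> {1..n}" "j \<in> {1..n}" "i \<notin> {u, v}" "j \<notin> {u, v}"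
    and non_adj: "{i, u} \<notin> E" "{j, v} \<notin> E"
    and room: "degree E i < d i" "degree E j < d j" "i = j \<Longrightarrow> degree E i + 2 \<le> d i"
  defines "E' \<equiv> insert {i, u} (insert {j, v} (E - {{u, v}}))"
  shows "partial_realization n d E'" and "card E' = Suc (card E)"
proof -
  have G: "simple_graph_on n E" and le: "\<forall>x\<in>{1..n}. degree E x \<le> d x"
    using pr by (auto simp: partial_realization_def)
  have "finite E" using G by (rule simple_graph_on_finite)
  have uvV: "u \<in> {1..n}" "v \<in> {1..n}" using G uv(1) by (auto simp: simple_graph_on_def)
  have new1: "{j, v} \<notin> E - {{u, v}}" using non_adj ij by auto
  have new2: "{i, u} \<notin> insert {j, v} (E - {{u, v}})"
    using non_adj ij uv(2) by (auto simp: doubleton_eq_iff)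
  have fin: "finite (E - {{u, v}})" "finite (insert {j, v} (E - {{u, v}}))"
    using \<open>finite E\<close> by auto
  have "card E > 0" using uv(1) \<open>finite E\<close> card_gt_0_iff by blast
  then show "card E' = Suc (card E)"
    unfolding E'_def using new1 new2 fin uv(1) \<open>finite E\<close> by (simp add: card_Diff_singleton_if)
  have deg: "degree E' x = degree E x - (if x \<in> {u, v} then 1 else 0)
      + (if x \<in> {j, v} then 1 else 0) + (if x \<in> {i, u} then 1 else 0)" for x
    unfolding E'_def degree_insert[OF fin(2) new2] degree_insert[OF fin(1) new1]
      degree_Diff_singleton[OF \<open>finite E\<close> uv(1)] ..
  have pos: "degree E x \<ge> 1" if "x \<in> {u, v}" for x
  proof -
    have "{u, v} \<in> {e\<in>E. x \<in> e}" using uv(1) that by simp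
    then show ?thesis using \<open>finite E\<close> by (auto simp: degree_def Suc_le_eq card_gt_0_iff)
  qed
  have "degree E' x \<le> d x" if "x \<in> {1..n}" for x
  proof (cases "x \<in> {u, v}")
    case True
    then have "degree E' x = degree E x" using deg[of x] pos[OF True] ij(3,4) uv(2) by auto
    then show ?thesis using le that by simp
  next
    case False
    then have "degree E' x = degree E x + (if x = j then 1 else 0) + (if x = i then 1 else 0)"
      using deg[of x] by simp
    then show ?thesis using le that room by (cases "x = i"; cases "x = j") auto
  qed
  moreover have "simple_graph_on n E'"
    using G ij uvV uv(2) unfolding E'_def simple_graph_on_def by auto
  ultimately show "partial_realization n d E'" by (simp add: partial_realization_def)
qed

lemma partial_realization_extend:
  assumes pr: "partial_realization n d E" and D: "\<forall>v\<in>{1..n}. d v \<le> D"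
    and big: "5 * D^2 < (\<Sum>v\<in>{1..n}. d v)" and even: "even (\<Sum>v\<in>{1..n}. d v)"
    and lt: "2 * card E < (\<Sum>v\<in>{1..n}. d v)"
  obtains E' where "partial_realization n d E'" "card E' = Suc (card E)"
proof (cases "\<exists>i j. i \<in> {1..n} \<and> j \<in> {1..n} \<and> degree E i < d i \<and> degree E j < d j
    \<and> i \<noteq> j \<and> {i, j} \<notin> E")
  case True
  then show ?thesis using partial_realization_insert[OF pr] that by blast
next
  case False
  have G: "simple_graph_on n E" and le: "\<forall>v\<in>{1..n}. degree E v \<le> d v"
    using pr by (auto simp: partial_realization_def)
  have "(\<Sum>v\<in>{1..n}. d v) - 2 * card E \<le> D * D"
    using False by (intro deficit_le_if_unsaturated_clique[OF pr D]) blast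
  then have many_edges: "2 * D * D < card E" using big lt by (simp add: power2_eq_square)
  obtain m where m: "(\<Sum>v\<in>{1..n}. d v) = 2 * m" using even by (rule evenE)
  then have "2 * card E + 2 \<le> (\<Sum>v\<in>{1..n}. d v)" using lt unfolding m by simp
  then obtain i j where ij: "i \<in> {1..n}" "j \<in> {1..n}" "degree E i < d i" "degree E j < d j"
    and twice: "i = j \<Longrightarrow> degree E i + 2 \<le> d i"
    using exists_unsaturated_pair[OF pr] by blast
  define A where "A = insert i (neighbours E i) \<union> insert j (neighbours E j)"
  have "degree E i < D" "degree E j < D" using ij D by (auto intro: order.strict_trans2)
  then have "card A \<le> D + D"
    using card_Un_le[of "insert i (neighbours E i)" "insert j (neighbours E j)"]
      add_mono[OF card_closed_neighbourhood_le[OF G] card_closed_neighbourhood_le[OF G]]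
    unfolding A_def by (meson order.trans)
  then have "card A * D < card E" using many_edges mult_le_mono1[of "card A" "D + D" D]
    by (simp add: add_mult_distrib)
  have "A \<subseteq> {1..n}"
    using G ij unfolding A_def neighbours_def simple_graph_on_def by auto
  then have deg_A: "\<forall>a\<in>A. degree E a \<le> D" using le D by (meson order.trans subsetD)
  have "finite A" using finite_neighbours[OF G] unfolding A_def by simp
  then obtain u v where uv: "{u, v} \<in> E" "u \<noteq> v" "u \<notin> A" "v \<notin> A"
    using exists_edge_avoiding[OF G _ deg_A \<open>card A * D < card E\<close>] by blast
  have "i \<notin> {u, v}" "j \<notin> {u, v}" "{i, u} \<notin> E" "{j, v} \<notin> E"
    using uv(3,4) by (auto simp: A_def neighbours_def)
  then show ?thesis
    using partial_realization_switch[OF pr uv(1,2) ij(1,2)] ij(3,4) twice that by blast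
qed

lemma graphical_if_even_sum_gt_5_max_sq:
  fixes d :: "nat \<Rightarrow> nat"
  assumes D: "\<forall>v\<in>{1..n}. d v \<le> D" and big: "5 * D^2 < (\<Sum>v\<in>{1..n}. d v)"
    and even: "even (\<Sum>v\<in>{1..n}. d v)"
  shows "graphical n d"
proof -
  define M where "M = (\<Sum>v\<in>{1..n}. d v)"
  have "\<exists>E. partial_realization n d E \<and> card E = k" if "k \<le> M div 2" for k
    using that
  proof (induction k)
    case 0
    show ?case by (auto intro!: exI[of _ "{}"] simp: partial_realization_def simple_graph_on_def degree_def)
  next
    case (Suc k)
    then obtain E where "partial_realization n d E" "card E = k" by auto
    moreover have "2 * k < M" using Suc.prems even unfolding M_def by fastforce
    ultimately show ?case
      using partial_realization_extend[OF _ D big even] unfolding M_def by metis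
  qed
  then obtain E where E: "partial_realization n d E" "2 * card E = M"
    using even unfolding M_def by fastforce
  then have "\<forall>v\<in>{1..n}. d v - degree E v = 0" using sum_deficit[OF E(1)] by (simp add: M_def)
  then show ?thesis using E(1) unfolding graphical_iff_degree partial_realization_def
    by (metis diff_is_0_eq le_antisym)
qed

lemma five_sq_less_from_condition:
  fixes D s m :: nat and \<delta> :: real
  assumes "real D ^ 2 * (inverse (real s / real m) * ln (real m)) ^ 12 \<le> \<delta> * real s"
    and "0 < s" "s \<le> m" "3 \<le> m" "\<delta> < 1/5"
  shows "5 * D^2 < m"
proof -
  have "inverse (real s / real m) \<ge> 1" using assms(2,3) by (simp add: field_simps)
  moreover have "ln (real m) \<ge> 1" using assms(4) exp_le ln_ge_iff[of "real m" 1] by simp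
  ultimately have "1 \<le> inverse (real s / real m) * ln (real m)"
    using mult_mono[of 1 _ 1] by fastforce
  then have "1 \<le> (inverse (real s / real m) * ln (real m)) ^ 12" by (rule one_le_power)
  from order_trans[OF mult_left_mono[OF this, of "real D ^ 2"] assms(1)]
  have "real D ^ 2 \<le> \<delta> * real s" by simp
  also have "\<dots> < 1/5 * real s" using assms(2,5) by (intro mult_strict_right_mono) auto
  also have "\<dots> \<le> real m / 5" using assms(3) by simp
  finally have "real (5 * D ^ 2) < real m" by simp
  then show ?thesis by (simp only: of_nat_less_iff)
qed

theorem proposition2p1:
  fixes d :: "nat \<Rightarrow> nat \<Rightarrow> nat"
    and S :: "nat \<Rightarrow> nat set"
    and \<delta> :: "nat \<Rightarrow> real"
  defines "M \<equiv> (\<lambda>n. \<Sum>i\<in>{1..n}. d n i)"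
    and "\<Delta> \<equiv> (\<lambda>n. Max (d n ` {1..n}))"
    and "dS \<equiv> (\<lambda>n. \<Sum>i\<in>S n. d n i)"
  assumes even_sum: "\<forall>\<^sub>F n in sequentially. even (M n)"
    and M_inf: "filterlim M at_top sequentially"
    and S_sub: "\<forall>\<^sub>F n in sequentially. S n \<subseteq> {1..n}"
    and dS_pos: "\<forall>\<^sub>F n in sequentially. dS n > 0"
    and delta_lim: "\<delta> \<longlonglongrightarrow> 0"
    and cond: "\<forall>\<^sub>F n in sequentially.
       real (\<Delta> n) ^ 2 * ((inverse (real (dS n) / real (M n))) * ln (real (M n))) ^ 12
         \<le> \<delta> n * real (dS n)"
  shows "\<forall>\<^sub>F n in sequentially. graphical n (d n)"
proof -
  have "\<forall>\<^sub>F n in sequentially. 3 \<le> M n" using M_inf by (simp add: filterlim_at_top)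
  moreover have "\<forall>\<^sub>F n in sequentially. \<delta> n < 1/5" using delta_lim by (rule order_tendstoD) simp
  ultimately show ?thesis using even_sum S_sub dS_pos cond
  proof eventually_elim
    case (elim n)
    have "dS n \<le> M n" unfolding dS_def M_def using elim by (intro sum_mono2) auto
    then have "5 * \<Delta> n ^ 2 < M n" using five_sq_less_from_condition elim by blast
    moreover have "\<forall>v\<in>{1..n}. d n v \<le> \<Delta> n" unfolding \<Delta>_def by simp
    ultimately show ?case using graphical_if_even_sum_gt_5_max_sq elim(3) unfolding M_def by blast
  qed
qed

end
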